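(* Let $u$ be a fast decreasing distribution on $\mathbb R^D$ (acting on $\mathbb C[\boldsymbol x]$) and $\mathcal Q_1,\mathcal Q_2\in\mathbb C[\boldsymbol x]$ coprime of degrees $m_1,m_2$ with $Z(\mathcal Q_2)\cap\operatorname{supp}u=\varnothing$. Let $\check u$ be a linear functional with $\mathcal Q_2\check u=u$ and put $\hat u=\mathcal Q_1\check u$ (so $\mathcal Q_2\hat u=\mathcal Q_1u$); assume $u$ and $\hat u$ quasi-definite, and let $R=\langle\check u,P(\boldsymbol x)\chi(\boldsymbol x)^\top\rangle$. Fix $k\in\mathbb Z_+$ and distinct nodes $\boldsymbol p_1,\dots,\boldsymbol p_{r_1}\in Z(\mathcal Q_1)$, $r_1=N_{k+m_1-1}-N_{k-1}$, and let $F=\big(\mathcal Q_1(\boldsymbol\Lambda)\big)_{[k],[k+m_1]}$. (i) If the matrix with block rows $\big(R_{[l],[0]},\dots,R_{[l],[k-1]},P_{[l]}(\boldsymbol p_1),\dots,P_{[l]}(\boldsymbol p_{r_1})\big)$, $l=0,\dots,k+m_1-1$, is nonsingular (this is the poisedness condition when $k<m_2$), then $$\hat P_{[k]}(\boldsymbol x)=\frac{F}{\mathcal Q_1(\boldsymbol x)}\Theta_*\begin{pmatrix}R_{[0],[0]}&\cdots&R_{[0],[k-1]}&P_{[0]}(\boldsymbol p_1)&\cdots&P_{[0]}(\boldsymbol p_{r_1})&P_{[0]}(\boldsymbol x)\\ \vdots&&\vdots&\vdots&&\vdots&\vdots\\ R_{[k+m_1],[0]}&\cdots&R_{[k+m_1],[k-1]}&P_{[k+m_1]}(\boldsymbol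 p_1)&\cdots&P_{[k+m_1]}(\boldsymbol p_{r_1})&P_{[k+m_1]}(\boldsymbol x)\end{pmatrix}$$ and $\hat H_{[k]}=F\,\Theta_*(\cdots)$ where the matrix is the same with last column $R_{[l],[k]}$ ($l=0,\dots,k+m_1$) in place of $P_{[l]}(\boldsymbol x)$. (ii) If $k\ge m_2$ and $\mathcal M_k=\{\boldsymbol\beta_1,\dots,\boldsymbol\beta_{r_2}\}$, $r_2=N_{k-1}-N_{k-m_2-1}$, are distinct multi-indices with $|\boldsymbol\beta_i|<k$ such that the set $\mathcal M_k\cup\{\boldsymbol p_j\}$ is poised, i.e. the matrix with block rows $\big(R_{[l],\boldsymbol\beta_1},\dots,R_{[l],\boldsymbol\beta_{r_2}},P_{[l]}(\boldsymbol p_1),\dots,P_{[l]}(\boldsymbol p_{r_1})\big)$, $l=k-m_2,\dots,k+m_1-1$, is nonsingular, then $$\hat P_{[k]}(\boldsymbol x)=\frac{F}{\mathcal Q_1(\boldsymbol x)}\Theta_*\begin{pmatrix}R_{[k-m_2],\boldsymbol\beta_1}&\cdots&R_{[k-m_2],\boldsymbol\beta_{r_2}}&P_{[k-m_2]}(\boldsymbol p_1)&\cdots&P_{[k-m_2]}(\boldsymbol p_{r_1})&P_{[k-m_2]}(\boldsymbol x)\\ \vdots&&\vdots&\vdots&&\vdots&\vdots\\ R_{[k+m_1],\boldsymbol\beta_1}&\cdots&R_{[k+m_1],\boldsymbol\beta_{r_2}}&P_{[k+m_1]}(\boldsymbol p_1)&\cdots&P_{[k+m_1]}(\boldsymbol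 p_{r_1})&P_{[k+m_1]}(\boldsymbol x)\end{pmatrix},$$ $\hat H_{[k]}\big((\mathcal Q_2(\boldsymbol\Lambda))_{[k-m_2],[k]}\big)^\top=F\,\Theta_*(\cdots)$ with the same matrix but last column $(H_{[k-m_2]},0,\dots,0)^\top$ (block rows $l=k-m_2,\dots,k+m_1$), and $\hat H_{[k]}=F\,\Theta_*(\cdots)$ with the same matrix but last column $R_{[l],[k]}$, $l=k-m_2,\dots,k+m_1$.
   Context: $[k]=\{\boldsymbol\alpha\in\mathbb Z_+^D:|\boldsymbol\alpha|=k\}$, $N_k=\binom{D+k}{D}=\sum_{j\le k}|[j]|$, $N_{-1}=0$. Multi-indices ordered by graded lexicographic order; $\chi(\boldsymbol x)$ vector of monomials in this order with blocks $\chi_{[k]}$; semi-infinite matrices have blocks $A_{[k],[l]}$; $A_{[l],\boldsymbol\beta}$ is the column of block row $[l]$ indexed by $\boldsymbol\beta$. $Z(\mathcal Q)\subset\mathbb C^D$ is the zero set of $\mathcal Q$. Spectral matrices $(\Lambda_a)_{\boldsymbol\alpha,\boldsymbol\beta}=\delta_{\boldsymbol\alpha+\boldsymbol e_a,\boldsymbol\beta}$, $\mathcal Q(\boldsymbol\Lambda)=\mathcal Q(\Lambda_1,\dots,\Lambda_D)$. For a linear functional $u$, $\langle Qu,P\rangle:=\langle u,QP\rangle$; moment matrix $G=\langle u,\chi\chi^\top\rangle$; quasi-definite: all block truncations nonsingular; then $G=S^{-1}HS^{-\top}$ with $S$ block lower unitriangular, $H$ block diagonal with blocks $H_{[k]}$;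 $P=S\chi$ with blocks $P_{[k]}$ are the monic multivariate orthogonal polynomials. Hatted symbols refer to $\hat u$. Last quasi-determinant: $\Theta_*\begin{pmatrix}A&B\\C&D\end{pmatrix}=D-CA^{-1}B$ with last displayed block row/column. *)

theory Defs
  imports "HOL-Analysis.Analysis"
begin

text \<open>A multi-index alpha in Z_+^D is a function 'd => nat (D = CARD('d)).
  A polynomial in C[x] is represented by its coefficient function with finite support.\<close>

type_synonym 'd mi = "'d \<Rightarrow> nat"
type_synonym 'd mpoly = "'d mi \<Rightarrow> complex"

definition deg_mi :: "'d::finite mi \<Rightarrow> nat" where
  "deg_mi \<alpha> = (\<Sum>a\<in>UNIV. \<alpha> a)"

definition blk :: "nat \<Rightarrow> 'd::finite mi set" where
  "blk k = {\<alpha>. deg_mi \<alpha> = k}"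

definition madd :: "'d mi \<Rightarrow> 'd mi \<Rightarrow> 'd mi" where
  "madd \<alpha> \<beta> = (\<lambda>a. \<alpha> a + \<beta> a)"

definition Nk :: "nat \<Rightarrow> int \<Rightarrow> nat" where
  "Nk D j = (if j < 0 then 0 else (D + nat j) choose D)"

definition psupp :: "'d mpoly \<Rightarrow> 'd mi set" where
  "psupp p = {\<alpha>. p \<alpha> \<noteq> 0}"

definition is_poly :: "'d mpoly \<Rightarrow> bool" where
  "is_poly p \<longleftrightarrow> finite (psupp p)"

definition mono :: "'d::finite mi \<Rightarrow> ('d \<Rightarrow> complex) \<Rightarrow> complex" where
  "mono \<alpha> x = (\<Prod>a\<in>UNIV. x a ^ \<alpha> a)"

definition peval :: "'d::finite mpoly \<Rightarrow> ('d \<Rightarrow> complex) \<Rightarrow> complex" where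
  "peval p x = (\<Sum>\<alpha>\<in>psupp p. p \<alpha> * mono \<alpha> x)"

definition pmul :: "'d mpoly \<Rightarrow> 'd mpoly \<Rightarrow> 'd mpoly" where
  "pmul p q = (\<lambda>\<gamma>. \<Sum>\<alpha>\<in>psupp p. \<Sum>\<beta>\<in>psupp q. if madd \<alpha> \<beta> = \<gamma> then p \<alpha> * q \<beta> else 0)"

definition pdvd :: "'d mpoly \<Rightarrow> 'd mpoly \<Rightarrow> bool" where
  "pdvd r q \<longleftrightarrow> (\<exists>s. is_poly s \<and> q = pmul r s)"

definition pdeg :: "'d::finite mpoly \<Rightarrow> nat" where
  "pdeg p = Max (deg_mi ` psupp p)"

definition coprime_poly :: "'d::finite mpoly \<Rightarrow> 'd mpoly \<Rightarrow> bool" where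
  "coprime_poly p q \<longleftrightarrow>
     (\<forall>r. is_poly r \<longrightarrow> pdvd r p \<longrightarrow> pdvd r q \<longrightarrow> (r \<noteq> (\<lambda>_. 0) \<and> pdeg r = 0))"

text \<open>Q(Lambda) for the spectral matrices (Lambda_a)_{alpha,beta} = delta_{alpha+e_a,beta}:
  (Q(Lambda))_{alpha,beta} = Q_{beta-alpha} if alpha <= beta componentwise, else 0.\<close>
definition specQ :: "'d mpoly \<Rightarrow> 'd mi \<Rightarrow> 'd mi \<Rightarrow> complex" where
  "specQ Q \<alpha> \<beta> = (if \<forall>a. \<alpha> a \<le> \<beta> a then Q (\<lambda>a. \<beta> a - \<alpha> a) else 0)"

text \<open>A linear functional v on C[x] is determined by its moments v(alpha) = <v, x^alpha>.\<close>


text \<open>(Q v): <Q v, x^alpha> = <v, Q x^alpha>\<close>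
definition fmul :: "'d mpoly \<Rightarrow> ('d mi \<Rightarrow> complex) \<Rightarrow> 'd mi \<Rightarrow> complex" where
  "fmul Q v \<alpha> = (\<Sum>\<beta>\<in>psupp Q. Q \<beta> * v (madd \<alpha> \<beta>))"

definition mom_mat :: "('d mi \<Rightarrow> complex) \<Rightarrow> 'd mi \<Rightarrow> 'd mi \<Rightarrow> complex" where
  "mom_mat v \<alpha> \<beta> = v (madd \<alpha> \<beta>)"

definition mmul :: "'j set \<Rightarrow> ('i \<Rightarrow> 'j \<Rightarrow> complex) \<Rightarrow> ('j \<Rightarrow> 'k \<Rightarrow> complex) \<Rightarrow> 'i \<Rightarrow> 'k \<Rightarrow> complex" where
  "mmul J A B i k = (\<Sum>j\<in>J. A i j * B j k)"

definition is_inverse_on :: "'i set \<Rightarrow> 'j set \<Rightarrow> ('i \<Rightarrow> 'j \<Rightarrow> complex) \<Rightarrow> ('j \<Rightarrow> 'i \<Rightarrow> complex) \<Rightarrow> bool" where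
  "is_inverse_on I J A B \<longleftrightarrow>
     (\<forall>i\<in>I. \<forall>i'\<in>I. mmul J A B i i' = (if i = i' then 1 else 0)) \<and>
     (\<forall>j\<in>J. \<forall>j'\<in>J. mmul I B A j j' = (if j = j' then 1 else 0))"

definition nonsingular_on :: "'i set \<Rightarrow> 'j set \<Rightarrow> ('i \<Rightarrow> 'j \<Rightarrow> complex) \<Rightarrow> bool" where
  "nonsingular_on I J A \<longleftrightarrow> finite I \<and> finite J \<and> (\<exists>B. is_inverse_on I J A B)"

definition minv :: "'i set \<Rightarrow> 'j set \<Rightarrow> ('i \<Rightarrow> 'j \<Rightarrow> complex) \<Rightarrow> 'j \<Rightarrow> 'i \<Rightarrow> complex" where
  "minv I J A = (SOME B. is_inverse_on I J A B)"

text \<open>Last quasi-determinant of the block matrix M with first rows I, last block row L,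
  first columns J, last block column K:  D - C A^{-1} B, indexed by L x K.\<close>
definition qdet_last :: "'i set \<Rightarrow> 'i set \<Rightarrow> 'j set \<Rightarrow> 'j set \<Rightarrow> ('i \<Rightarrow> 'j \<Rightarrow> complex) \<Rightarrow> 'i \<Rightarrow> 'j \<Rightarrow> complex" where
  "qdet_last I L J K M = (\<lambda>r c. M r c - mmul I (mmul J M (minv I J M)) M r c)"

definition quasi_definite :: "('d::finite mi \<Rightarrow> complex) \<Rightarrow> bool" where
  "quasi_definite v \<longleftrightarrow> (\<forall>k. nonsingular_on {\<alpha>. deg_mi \<alpha> \<le> k} {\<alpha>. deg_mi \<alpha> \<le> k} (mom_mat v))"

text \<open>Block factorization G = S^{-1} H S^{-T} of the moment matrix, written as S G S^T = H
  (S block lower unitriangular, hence invertible; all sums finite).\<close>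
definition mop_fact :: "('d::finite mi \<Rightarrow> complex) \<Rightarrow> ('d mi \<Rightarrow> 'd mi \<Rightarrow> complex)
    \<Rightarrow> ('d mi \<Rightarrow> 'd mi \<Rightarrow> complex) \<Rightarrow> bool" where
  "mop_fact v S H \<longleftrightarrow>
     (\<forall>\<alpha> \<beta>. deg_mi \<alpha> < deg_mi \<beta> \<longrightarrow> S \<alpha> \<beta> = 0) \<and>
     (\<forall>\<alpha> \<beta>. deg_mi \<alpha> = deg_mi \<beta> \<longrightarrow> S \<alpha> \<beta> = (if \<alpha> = \<beta> then 1 else 0)) \<and>
     (\<forall>\<alpha> \<beta>. deg_mi \<alpha> \<noteq> deg_mi \<beta> \<longrightarrow> H \<alpha> \<beta> = 0) \<and>
     (\<forall>\<alpha> \<delta>. (\<Sum>\<gamma>\<in>{\<gamma>. deg_mi \<gamma> \<le> deg_mi \<delta>}.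
                (\<Sum>\<beta>\<in>{\<beta>. deg_mi \<beta> \<le> deg_mi \<alpha>}. S \<alpha> \<beta> * mom_mat v \<beta> \<gamma>) * S \<delta> \<gamma>) = H \<alpha> \<delta>)"

text \<open>P = S chi: the entry P_alpha(x)\<close>
definition mop :: "('d::finite mi \<Rightarrow> 'd mi \<Rightarrow> complex) \<Rightarrow> 'd mi \<Rightarrow> ('d \<Rightarrow> complex) \<Rightarrow> complex" where
  "mop S \<alpha> x = (\<Sum>\<beta>\<in>{\<beta>. deg_mi \<beta> \<le> deg_mi \<alpha>}. S \<alpha> \<beta> * mono \<beta> x)"

text \<open>R = <w, P(x) chi(x)^T>: R_{alpha,beta} = <w, P_alpha x^beta>\<close>
definition Rmat :: "('d::finite mi \<Rightarrow> 'd mi \<Rightarrow> complex) \<Rightarrow> ('d mi \<Rightarrow> complex) \<Rightarrow> 'd mi \<Rightarrow> 'd mi \<Rightarrow> complex" where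
  "Rmat S w \<alpha> \<beta> = (\<Sum>\<gamma>\<in>{\<gamma>. deg_mi \<gamma> \<le> deg_mi \<alpha>}. S \<alpha> \<gamma> * w (madd \<gamma> \<beta>))"

text \<open>Column indices of the bordered matrices: R-columns (multi-indices), node columns, last column(s).\<close>
datatype ('a, 'b) qcol = RCol 'a | NCol nat | LCol 'b

definition bmat :: "('d::finite mi \<Rightarrow> 'd mi \<Rightarrow> complex) \<Rightarrow> ('d mi \<Rightarrow> 'd mi \<Rightarrow> complex)
    \<Rightarrow> (nat \<Rightarrow> 'd \<Rightarrow> complex) \<Rightarrow> ('d mi \<Rightarrow> 'b \<Rightarrow> complex) \<Rightarrow> 'd mi \<Rightarrow> ('d mi, 'b) qcol \<Rightarrow> complex" where
  "bmat S R p lastc \<alpha> c = (case c of RCol \<beta> \<Rightarrow> R \<alpha> \<beta> | NCol j \<Rightarrow> mop S \<alpha> (p j) | LCol b \<Rightarrow> lastc \<alpha> b)"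

fun dpart :: "'d::finite list \<Rightarrow> (real^'d \<Rightarrow> complex) \<Rightarrow> real^'d \<Rightarrow> complex" where
  "dpart [] f = f"
| "dpart (a # ds) f = (\<lambda>x. vector_derivative (\<lambda>t. dpart ds f (x + t *\<^sub>R axis a 1)) (at 0))"

definition smooth_fun :: "(real^'d::finite \<Rightarrow> complex) \<Rightarrow> bool" where
  "smooth_fun f \<longleftrightarrow> (\<forall>ds. continuous_on UNIV (dpart ds f) \<and>
       (\<forall>a x. (\<lambda>t. dpart ds f (x + t *\<^sub>R axis a 1)) differentiable (at 0)))"

definition Oc_step :: "nat \<Rightarrow> (real^'d::finite \<Rightarrow> complex) set" where
  "Oc_step k = {f. smooth_fun f \<and> (\<forall>ds. \<exists>C. \<forall>x. cmod (dpart ds f x) \<le> C * (1 + norm x ^ 2) ^ k)}"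

definition Oc :: "(real^'d::finite \<Rightarrow> complex) set" where
  "Oc = (\<Union>k. Oc_step k)"

definition Oc_seminorm :: "nat \<Rightarrow> nat \<Rightarrow> (real^'d::finite \<Rightarrow> complex) \<Rightarrow> real" where
  "Oc_seminorm k N f = (\<Sum>ds\<in>{ds. length ds \<le> N}. (SUP x. cmod (dpart ds f x) / (1 + norm x ^ 2) ^ k))"

text \<open>Fast decreasing (rapidly decreasing) distributions: the dual O_C' of O_C, i.e. linear functionals
  on O_C continuous on each step O_C^k of the inductive limit.\<close>
definition fast_decreasing_distribution :: "((real^'d::finite \<Rightarrow> complex) \<Rightarrow> complex) \<Rightarrow> bool" where
  "fast_decreasing_distribution u \<longleftrightarrow>
     (\<forall>f\<in>Oc. \<forall>g\<in>Oc. \<forall>c. u (\<lambda>x. f x + g x) = u f + u g \<and> u (\<lambda>x. c * f x) = c * u f) \<and>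
     (\<forall>k. \<exists>C N. \<forall>f\<in>Oc_step k. cmod (u f) \<le> C * Oc_seminorm k N f)"

definition test_fun :: "(real^'d::finite \<Rightarrow> complex) \<Rightarrow> bool" where
  "test_fun \<phi> \<longleftrightarrow> smooth_fun \<phi> \<and> compact (closure {x. \<phi> x \<noteq> 0})"

definition dist_supp :: "((real^'d::finite \<Rightarrow> complex) \<Rightarrow> complex) \<Rightarrow> (real^'d) set" where
  "dist_supp u = - {x. \<exists>U. open U \<and> x \<in> U \<and>
        (\<forall>\<phi>. test_fun \<phi> \<and> closure {y. \<phi> y \<noteq> 0} \<subseteq> U \<longrightarrow> u \<phi> = 0)}"

definition dmom :: "((real^'d::finite \<Rightarrow> complex) \<Rightarrow> complex) \<Rightarrow> 'd mi \<Rightarrow> complex" where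
  "dmom u \<alpha> = u (\<lambda>x. mono \<alpha> (\<lambda>a. complex_of_real (x $ a)))"

end

theory Submission
  imports Defs
begin

text \<open>Expand \<open>Q\<^sub>1 P\<^sup>^\<^sub>\<alpha>\<close>, \<open>|\<alpha>| = k\<close>, in the basis \<open>P\<^sub>l\<close>, \<open>|l| \<le> k + m\<^sub>1\<close>, with coefficient row \<open>c\<close>.
  As both families are monic, \<open>c\<close> is the row \<open>\<alpha>\<close> of \<open>Q\<^sub>1(\<Lambda>)\<close> on the top block \<open>[k + m\<^sub>1]\<close>.
  The row \<open>c\<close> annihilates the node columns \<open>P(p\<^sub>j)\<close>, since \<open>Q\<^sub>1(p\<^sub>j) = 0\<close>, and the columns
  \<open>R\<^sub>\<beta>\<close> with \<open>|\<beta>| < k\<close>, since \<open>\<Sum> c\<^sub>l R\<^sub>l\<^sub>\<beta> = \<langle>uc, Q\<^sub>1 P\<^sup>^\<^sub>\<alpha> x\<^sup>\<beta>\<rangle> = \<langle>uh, P\<^sup>^\<^sub>\<alpha> x\<^sup>\<beta>\<rangle> = 0\<close>.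
  For (ii) moreover \<open>\<Sum> c\<^sub>l \<langle>u, P\<^sub>l x\<^sup>\<gamma>\<rangle> = \<langle>uh, P\<^sup>^\<^sub>\<alpha> Q\<^sub>2 x\<^sup>\<gamma>\<rangle> = 0\<close> for \<open>|\<gamma>| < k - m\<^sub>2\<close>,
  which by quasi-definiteness of \<open>u\<close> forces \<open>c\<^sub>l = 0\<close> for \<open>|l| < k - m\<^sub>2\<close>.  Nonsingularity of the
  poised block then expresses the lower part of \<open>c\<close> through its top part, and pairing \<open>c\<close> with
  the last column (\<open>P(x)\<close>, \<open>R\<^sub>[\<^sub>k\<^sub>]\<close> or the \<open>H\<close>-column) yields the quasi-determinantal formulas.\<close>

lemma deg_mi_madd [simp]: "deg_mi (madd \<alpha> \<beta>) = deg_mi \<alpha> + deg_mi \<beta>"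
  by (simp add: deg_mi_def madd_def sum.distrib)

lemma madd_commute: "madd \<alpha> \<beta> = madd \<beta> \<alpha>"
  by (simp add: madd_def add.commute)

lemma mono_madd: "mono (madd \<alpha> \<beta>) x = mono \<alpha> x * mono \<beta> x"
  by (simp add: mono_def madd_def power_add prod.distrib)

lemma finite_deg_mi_le [simp]: "finite {\<alpha>::'d::finite mi. deg_mi \<alpha> \<le> n}"
proof -
  have "\<alpha> a \<le> deg_mi \<alpha>" for \<alpha> :: "'d mi" and a
    unfolding deg_mi_def by (rule member_le_sum) auto
  then have "{\<alpha>::'d mi. deg_mi \<alpha> \<le> n} \<subseteq> {f. \<forall>a. (a \<in> UNIV \<longrightarrow> f a \<in> {..n}) \<and> (a \<notin> UNIV \<longrightarrow> f a = 0)}"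
    using order_trans by fastforce
  moreover have "finite {f::'d mi. \<forall>a. (a \<in> UNIV \<longrightarrow> f a \<in> {..n}) \<and> (a \<notin> UNIV \<longrightarrow> f a = 0)}"
    by (rule finite_set_of_finite_funs) auto
  ultimately show ?thesis by (rule finite_subset)
qed

lemma finite_deg_mi_less [simp]: "finite {\<alpha>::'d::finite mi. deg_mi \<alpha> < n}"
  by (rule finite_subset[OF _ finite_deg_mi_le[of n]]) auto

lemma finite_deg_mi_eq [simp]: "finite {\<alpha>::'d::finite mi. deg_mi \<alpha> = n}"
  by (rule finite_subset[OF _ finite_deg_mi_le[of n]]) auto

lemma finite_blk [simp]: "finite (blk n :: 'd::finite mi set)"
  by (simp add: blk_def)

lemma finite_deg_mi_between [simp]: "finite {\<alpha>::'d::finite mi. m \<le> deg_mi \<alpha> \<and> deg_mi \<alpha> < n}"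
  by (rule finite_subset[OF _ finite_deg_mi_less[of n]]) auto

lemma specQ_eq_sum:
  assumes "finite (psupp Q)"
  shows "(\<Sum>a\<in>psupp Q. if madd a \<alpha> = \<beta> then Q a else 0) = specQ Q \<alpha> \<beta>"
proof (cases "\<forall>i. \<alpha> i \<le> \<beta> i")
  case True
  then have "madd a \<alpha> = \<beta> \<longleftrightarrow> a = (\<lambda>i. \<beta> i - \<alpha> i)" for a
    by (auto simp: madd_def fun_eq_iff) (metis add_diff_cancel_right')
  then show ?thesis
    using True assms by (simp add: sum.delta' psupp_def specQ_def)
next
  case False
  then have "madd a \<alpha> \<noteq> \<beta>" for a by (auto simp: madd_def)
  then show ?thesis using False unfolding specQ_def by auto
qed

definition block_unitriangular :: "('d::finite mi \<Rightarrow> 'd mi \<Rightarrow> complex) \<Rightarrow> bool" where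
  "block_unitriangular S \<longleftrightarrow>
     (\<forall>\<alpha> \<beta>. deg_mi \<alpha> < deg_mi \<beta> \<longrightarrow> S \<alpha> \<beta> = 0) \<and>
     (\<forall>\<alpha> \<beta>. deg_mi \<alpha> = deg_mi \<beta> \<longrightarrow> S \<alpha> \<beta> = (if \<alpha> = \<beta> then 1 else 0))"

lemma block_unitriangularD:
  assumes "block_unitriangular S"
  shows "deg_mi \<alpha> < deg_mi \<beta> \<Longrightarrow> S \<alpha> \<beta> = 0"
    and "deg_mi \<alpha> = deg_mi \<beta> \<Longrightarrow> S \<alpha> \<beta> = (if \<alpha> = \<beta> then 1 else 0)"
  using assms unfolding block_unitriangular_def by auto

lemma sum_deg_mi_le_block_unitriangular:
  fixes S :: "'d::finite mi \<Rightarrow> 'd mi \<Rightarrow> complex"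
  assumes "block_unitriangular S" and "deg_mi l \<le> m"
  shows "(\<Sum>\<gamma>\<in>{\<gamma>. deg_mi \<gamma> \<le> m}. f \<gamma> * S l \<gamma>) = (\<Sum>\<gamma>\<in>{\<gamma>. deg_mi \<gamma> \<le> deg_mi l}. f \<gamma> * S l \<gamma>)"
  by (rule sum.mono_neutral_right) (use assms in \<open>auto simp: block_unitriangularD\<close>)

lemma block_unitriangular_row_solve:
  fixes S :: "'d::finite mi \<Rightarrow> 'd mi \<Rightarrow> complex"
  assumes U: "block_unitriangular S"
  shows "\<forall>\<gamma>. n \<le> deg_mi \<gamma> \<longrightarrow> T \<gamma> = 0 \<Longrightarrow>
     \<exists>c. (\<forall>\<gamma>. (\<Sum>l\<in>{l. deg_mi l < n}. c l * S l \<gamma>) = T \<gamma>) \<and> (\<forall>l. Suc (deg_mi l) = n \<longrightarrow> c l = T l)"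
proof (induction n arbitrary: T)
  case 0
  then show ?case by (intro exI[of _ "\<lambda>_. 0"]) auto
next
  case (Suc n)
  define T' where "T' \<gamma> = T \<gamma> - (\<Sum>l\<in>blk n. T l * S l \<gamma>)" for \<gamma>
  have "T' \<gamma> = 0" if "n \<le> deg_mi \<gamma>" for \<gamma>
  proof (cases "deg_mi \<gamma> = n")
    case True
    have "(\<Sum>l\<in>blk n. T l * S l \<gamma>) = (\<Sum>l\<in>blk n. if l = \<gamma> then T l else 0)"
      by (rule sum.cong) (auto simp: blk_def block_unitriangularD(2)[OF U] True)
    also have "\<dots> = T \<gamma>" using True by (simp add: sum.delta[OF finite_blk]) (simp add: blk_def)
    finally show ?thesis by (simp add: T'_def)
  next
    case False
    then have "(\<Sum>l\<in>blk n. T l * S l \<gamma>) = 0"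
      using that by (auto simp: blk_def block_unitriangularD(1)[OF U] intro!: sum.neutral)
    then show ?thesis using False that Suc.prems by (simp add: T'_def)
  qed
  then obtain c' where c': "\<forall>\<gamma>. (\<Sum>l\<in>{l. deg_mi l < n}. c' l * S l \<gamma>) = T' \<gamma>"
    using Suc.IH by blast
  define c where "c l = (if deg_mi l = n then T l else c' l)" for l
  have split: "{l. deg_mi l < Suc n} = {l. deg_mi l < n} \<union> blk n" by (auto simp: blk_def)
  have "(\<Sum>l\<in>{l. deg_mi l < Suc n}. c l * S l \<gamma>) = T \<gamma>" for \<gamma>
  proof -
    have "(\<Sum>l\<in>{l. deg_mi l < Suc n}. c l * S l \<gamma>)
        = (\<Sum>l\<in>{l. deg_mi l < n}. c l * S l \<gamma>) + (\<Sum>l\<in>blk n. c l * S l \<gamma>)"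
      unfolding split by (rule sum.union_disjoint) (auto simp: blk_def)
    also have "(\<Sum>l\<in>{l. deg_mi l < n}. c l * S l \<gamma>) = T' \<gamma>"
      using c' by (simp add: c_def)
    also have "(\<Sum>l\<in>blk n. c l * S l \<gamma>) = (\<Sum>l\<in>blk n. T l * S l \<gamma>)"
      by (rule sum.cong) (auto simp: c_def blk_def)
    finally show ?thesis by (simp add: T'_def)
  qed
  then show ?case by (intro exI[of _ c]) (simp add: c_def)
qed

lemma block_unitriangular_left_cancel:
  fixes S :: "'d::finite mi \<Rightarrow> 'd mi \<Rightarrow> complex"
  assumes U: "block_unitriangular S"
    and y: "\<And>l. deg_mi l \<le> j \<Longrightarrow> (\<Sum>\<gamma>\<in>{\<gamma>. deg_mi \<gamma> \<le> j}. y \<gamma> * S l \<gamma>) = 0"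
    and \<gamma>: "deg_mi \<gamma> \<le> j"
  shows "y \<gamma> = 0"
proof -
  let ?D = "{\<gamma>'::'d mi. deg_mi \<gamma>' \<le> j}"
  have top: "\<forall>\<gamma>'. Suc (deg_mi \<gamma>) \<le> deg_mi \<gamma>' \<longrightarrow> (if \<gamma>' = \<gamma> then 1 else 0) = (0::complex)"
    by auto
  obtain d where d: "\<And>\<gamma>'. (\<Sum>l\<in>{l. deg_mi l < Suc (deg_mi \<gamma>)}. d l * S l \<gamma>') = (if \<gamma>' = \<gamma> then 1 else 0)"
    using block_unitriangular_row_solve[OF U top] by auto
  have "y \<gamma> = (\<Sum>\<gamma>'\<in>?D. y \<gamma>' * (if \<gamma>' = \<gamma> then 1 else 0))"
    using \<gamma> by (simp add: if_distrib cong: if_cong)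
  also have "\<dots> = (\<Sum>l\<in>{l. deg_mi l < Suc (deg_mi \<gamma>)}. d l * (\<Sum>\<gamma>'\<in>?D. y \<gamma>' * S l \<gamma>'))"
    by (simp add: d[symmetric] sum_distrib_left sum.swap[of _ ?D] mult_ac)
  also have "\<dots> = 0"
    by (rule sum.neutral) (use \<gamma> y in auto)
  finally show ?thesis .
qed

lemma mop_factD:
  fixes S :: "'d::finite mi \<Rightarrow> 'd mi \<Rightarrow> complex"
  assumes "mop_fact v S H"
  shows "block_unitriangular S"
    and "deg_mi \<alpha> \<noteq> deg_mi \<beta> \<Longrightarrow> H \<alpha> \<beta> = 0"
    and "(\<Sum>\<gamma>\<in>{\<gamma>. deg_mi \<gamma> \<le> deg_mi \<delta>}. Rmat S v \<alpha> \<gamma> * S \<delta> \<gamma>) = H \<alpha> \<delta>"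
  using assms unfolding mop_fact_def block_unitriangular_def Rmat_def mom_mat_def by auto

lemma Rmat_eq_0_if_deg_less:
  fixes S :: "'d::finite mi \<Rightarrow> 'd mi \<Rightarrow> complex"
  assumes mf: "mop_fact v S H" and lt: "deg_mi \<beta> < deg_mi \<alpha>"
  shows "Rmat S v \<alpha> \<beta> = 0"
proof (rule block_unitriangular_left_cancel[OF mop_factD(1)[OF mf], where j = "deg_mi \<beta>"])
  fix l :: "'d mi" assume l: "deg_mi l \<le> deg_mi \<beta>"
  have "(\<Sum>\<gamma>\<in>{\<gamma>. deg_mi \<gamma> \<le> deg_mi \<beta>}. Rmat S v \<alpha> \<gamma> * S l \<gamma>) = H \<alpha> l"
    by (simp add: sum_deg_mi_le_block_unitriangular[OF mop_factD(1)[OF mf] l] mop_factD(3)[OF mf])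
  also have "\<dots> = 0" using mop_factD(2)[OF mf] l lt by simp
  finally show "(\<Sum>\<gamma>\<in>{\<gamma>. deg_mi \<gamma> \<le> deg_mi \<beta>}. Rmat S v \<alpha> \<gamma> * S l \<gamma>) = 0" .
qed simp

lemma Rmat_eq_H_if_deg_eq:
  fixes S :: "'d::finite mi \<Rightarrow> 'd mi \<Rightarrow> complex"
  assumes mf: "mop_fact v S H" and eq: "deg_mi \<beta> = deg_mi \<alpha>"
  shows "Rmat S v \<alpha> \<beta> = H \<alpha> \<beta>"
proof -
  note U = mop_factD(1)[OF mf]
  have split: "{\<gamma>. deg_mi \<gamma> \<le> deg_mi \<beta>} = {\<gamma>. deg_mi \<gamma> < deg_mi \<alpha>} \<union> blk (deg_mi \<alpha>)"
    using eq by (auto simp: blk_def)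
  have "H \<alpha> \<beta> = (\<Sum>\<gamma>\<in>{\<gamma>. deg_mi \<gamma> < deg_mi \<alpha>}. Rmat S v \<alpha> \<gamma> * S \<beta> \<gamma>)
      + (\<Sum>\<gamma>\<in>blk (deg_mi \<alpha>). Rmat S v \<alpha> \<gamma> * S \<beta> \<gamma>)"
    unfolding mop_factD(3)[OF mf, symmetric] split
    by (rule sum.union_disjoint) (auto simp: blk_def)
  also have "(\<Sum>\<gamma>\<in>{\<gamma>. deg_mi \<gamma> < deg_mi \<alpha>}. Rmat S v \<alpha> \<gamma> * S \<beta> \<gamma>) = 0"
    by (rule sum.neutral) (auto simp: Rmat_eq_0_if_deg_less[OF mf])
  also have "(\<Sum>\<gamma>\<in>blk (deg_mi \<alpha>). Rmat S v \<alpha> \<gamma> * S \<beta> \<gamma>) = (\<Sum>\<gamma>\<in>blk (deg_mi \<alpha>). if \<gamma> = \<beta> then Rmat S v \<alpha> \<gamma> else 0)"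
    by (rule sum.cong) (auto simp: blk_def block_unitriangularD(2)[OF U] eq)
  finally show ?thesis by (simp add: blk_def eq)
qed

lemma H_column_eq_Rmat:
  fixes S :: "'d::finite mi \<Rightarrow> 'd mi \<Rightarrow> complex"
  assumes "mop_fact v S H" and "deg_mi \<gamma> \<le> deg_mi \<alpha>"
  shows "(if deg_mi \<alpha> = deg_mi \<gamma> then H \<alpha> \<gamma> else 0) = Rmat S v \<alpha> \<gamma>"
  using assms Rmat_eq_0_if_deg_less Rmat_eq_H_if_deg_eq by fastforce

text \<open>Quasi-definiteness enters only here: a combination \<open>w\<close> of the rows of \<open>R\<close> in the block \<open>[j]\<close>
  is \<open>w S\<close> times the moment matrix truncated at degree \<open>j\<close>, which is nonsingular.\<close>

lemma Rmat_rows_left_cancel: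
  fixes S :: "'d::finite mi \<Rightarrow> 'd mi \<Rightarrow> complex"
  assumes U: "block_unitriangular S" and qd: "quasi_definite v"
    and ann: "\<And>\<gamma>. deg_mi \<gamma> \<le> j \<Longrightarrow> (\<Sum>l\<in>blk j. w l * Rmat S v l \<gamma>) = 0"
    and l0: "l0 \<in> blk j"
  shows "w l0 = 0"
proof -
  let ?D = "{\<gamma>::'d mi. deg_mi \<gamma> \<le> j}"
  define x where "x \<beta> = (\<Sum>l\<in>blk j. w l * S l \<beta>)" for \<beta>
  have xG: "(\<Sum>\<beta>\<in>?D. x \<beta> * mom_mat v \<beta> \<gamma>) = (\<Sum>l\<in>blk j. w l * Rmat S v l \<gamma>)" for \<gamma>
  proof -
    have "(\<Sum>\<beta>\<in>?D. x \<beta> * mom_mat v \<beta> \<gamma>) = (\<Sum>l\<in>blk j. w l * (\<Sum>\<beta>\<in>?D. S l \<beta> * mom_mat v \<beta> \<gamma>))"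
      unfolding x_def by (simp add: sum_distrib_left sum_distrib_right sum.swap[of _ ?D] mult_ac)
    also have "\<dots> = (\<Sum>l\<in>blk j. w l * Rmat S v l \<gamma>)"
      unfolding Rmat_def mom_mat_def by (rule sum.cong) (auto simp: blk_def)
    finally show ?thesis .
  qed
  obtain B where B: "is_inverse_on ?D ?D (mom_mat v) B"
    using qd unfolding quasi_definite_def nonsingular_on_def by blast
  have "x l0 = (\<Sum>\<beta>\<in>?D. x \<beta> * (if \<beta> = l0 then 1 else 0))"
    using l0 by (simp add: blk_def if_distrib cong: if_cong)
  also have "\<dots> = (\<Sum>\<beta>\<in>?D. x \<beta> * (\<Sum>\<gamma>\<in>?D. mom_mat v \<beta> \<gamma> * B \<gamma> l0))"
    by (rule sum.cong[OF refl]) (use B l0 in \<open>auto simp: is_inverse_on_def mmul_def blk_def\<close>)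
  also have "\<dots> = (\<Sum>\<gamma>\<in>?D. (\<Sum>\<beta>\<in>?D. x \<beta> * mom_mat v \<beta> \<gamma>) * B \<gamma> l0)"
    unfolding sum_distrib_left sum_distrib_right by (subst sum.swap) (simp add: mult_ac)
  also have "\<dots> = 0" by (simp add: xG ann)
  finally have "x l0 = 0" .
  moreover have "x l0 = (\<Sum>l\<in>blk j. if l = l0 then w l else 0)"
    unfolding x_def by (rule sum.cong) (use l0 in \<open>auto simp: blk_def block_unitriangularD(2)[OF U]\<close>)
  ultimately show ?thesis using l0 by simp
qed

lemma H_block_left_cancel:
  fixes S :: "'d::finite mi \<Rightarrow> 'd mi \<Rightarrow> complex"
  assumes mf: "mop_fact v S H" and qd: "quasi_definite v"
    and z: "\<And>l'. l' \<in> blk j \<Longrightarrow> (\<Sum>l\<in>blk j. w l * H l l') = 0"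
    and l0: "l0 \<in> blk j"
  shows "w l0 = 0"
proof (rule Rmat_rows_left_cancel[OF mop_factD(1)[OF mf] qd _ l0])
  note U = mop_factD(1)[OF mf]
  let ?D = "{\<gamma>::'d mi. deg_mi \<gamma> \<le> j}"
  fix \<gamma> :: "'d mi" assume \<gamma>: "deg_mi \<gamma> \<le> j"
  show "(\<Sum>l\<in>blk j. w l * Rmat S v l \<gamma>) = 0"
  proof (rule block_unitriangular_left_cancel[OF U _ \<gamma>])
    fix l' :: "'d mi" assume l': "deg_mi l' \<le> j"
    have "(\<Sum>\<gamma>\<in>?D. (\<Sum>l\<in>blk j. w l * Rmat S v l \<gamma>) * S l' \<gamma>)
        = (\<Sum>l\<in>blk j. w l * (\<Sum>\<gamma>\<in>?D. Rmat S v l \<gamma> * S l' \<gamma>))"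
      by (simp add: sum_distrib_left sum_distrib_right sum.swap[of _ ?D] mult_ac)
    also have "\<dots> = (\<Sum>l\<in>blk j. w l * H l l')"
      by (simp add: sum_deg_mi_le_block_unitriangular[OF U l'] mop_factD(3)[OF mf])
    also have "\<dots> = 0"
    proof (cases "deg_mi l' = j")
      case True then show ?thesis using z by (simp add: blk_def)
    next
      case False then show ?thesis by (intro sum.neutral) (auto simp: blk_def mop_factD(2)[OF mf])
    qed
    finally show "(\<Sum>\<gamma>\<in>?D. (\<Sum>l\<in>blk j. w l * Rmat S v l \<gamma>) * S l' \<gamma>) = 0" .
  qed
qed

text \<open>If a row vector \<open>c\<close> on the rows \<open>I \<union> L\<close> annihilates the columns \<open>J\<close>, and the block \<open>M\<^sub>I\<^sub>J\<close> is
  nonsingular, then \<open>c\<^sub>I = - c\<^sub>L M\<^sub>L\<^sub>J M\<^sub>I\<^sub>J\<^sup>-\<^sup>1\<close>, so on any further column \<open>c M = c\<^sub>L \<Theta>\<^sub>*\<close>.\<close>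

lemma row_combination_qdet_last:
  fixes M :: "'i \<Rightarrow> 'j \<Rightarrow> complex"
  assumes fin: "finite I" "finite L" "finite J" and disj: "I \<inter> L = {}"
    and inv: "\<exists>B. is_inverse_on I J M B"
    and ann: "\<forall>j\<in>J. (\<Sum>i\<in>I \<union> L. c i * M i j) = 0"
  shows "(\<Sum>i\<in>I \<union> L. c i * M i \<kappa>) = (\<Sum>l\<in>L. c l * qdet_last I L J K M l \<kappa>)"
proof -
  define B where "B = minv I J M"
  have "is_inverse_on I J M B" using someI_ex[OF inv] unfolding B_def minv_def .
  then have MB: "\<And>i i'. i \<in> I \<Longrightarrow> i' \<in> I \<Longrightarrow> (\<Sum>j\<in>J. M i j * B j i') = (if i = i' then 1 else 0)"
    unfolding is_inverse_on_def mmul_def by blast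
  have union: "\<And>f. (\<Sum>i\<in>I \<union> L. f i) = (\<Sum>i\<in>I. f i) + (\<Sum>i\<in>L. f i)"
    by (rule sum.union_disjoint) (use fin disj in auto)
  have ann_I: "(\<Sum>i\<in>I. c i * M i j) = - (\<Sum>l\<in>L. c l * M l j)" if "j \<in> J" for j
    using ann that union[of "\<lambda>i. c i * M i j"] by (simp add: eq_neg_iff_add_eq_0)
  have c_I: "c i' = - (\<Sum>j\<in>J. (\<Sum>l\<in>L. c l * M l j) * B j i')" if "i' \<in> I" for i'
  proof -
    have "c i' = (\<Sum>i\<in>I. c i * (\<Sum>j\<in>J. M i j * B j i'))"
      using that fin by (simp add: MB if_distrib cong: if_cong)
    also have "\<dots> = (\<Sum>j\<in>J. (\<Sum>i\<in>I. c i * M i j) * B j i')"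
      by (simp add: sum_distrib_left sum_distrib_right sum.swap[of _ I J] mult_ac)
    also have "\<dots> = (\<Sum>j\<in>J. (- (\<Sum>l\<in>L. c l * M l j)) * B j i')"
      by (rule sum.cong) (use ann_I in auto)
    finally show ?thesis by (simp add: sum_negf)
  qed
  have "(\<Sum>i\<in>I. c i * M i \<kappa>) = (\<Sum>i\<in>I. - (\<Sum>j\<in>J. (\<Sum>l\<in>L. c l * M l j) * B j i) * M i \<kappa>)"
    by (rule sum.cong) (use c_I in auto)
  also have "\<dots> = - (\<Sum>l\<in>L. c l * mmul I (mmul J M B) M l \<kappa>)"
    unfolding mmul_def
    by (simp add: sum_distrib_left sum_distrib_right sum_negf mult_ac sum.swap[of _ I L] sum.swap[of _ J L])
  finally show ?thesis
    unfolding union qdet_last_def B_def[symmetric] by (simp add: right_diff_distrib sum_subtractf)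
qed

lemma is_inverse_on_reindex:
  assumes h: "bij_betw h J' J"
    and A: "\<And>i j. i \<in> I \<Longrightarrow> j \<in> J' \<Longrightarrow> A' i j = A i (h j)"
    and B: "is_inverse_on I J A B"
  shows "is_inverse_on I J' A' (\<lambda>j. B (h j))"
  unfolding is_inverse_on_def mmul_def
proof (intro conjI ballI)
  fix i i' assume i: "i \<in> I" and i': "i' \<in> I"
  have "(\<Sum>j\<in>J'. A' i j * B (h j) i') = (\<Sum>j\<in>J'. A i (h j) * B (h j) i')"
    by (rule sum.cong) (use A i in auto)
  also have "\<dots> = (\<Sum>j\<in>J. A i j * B j i')"
    by (rule sum.reindex_bij_betw[OF h])
  finally show "(\<Sum>j\<in>J'. A' i j * B (h j) i') = (if i = i' then 1 else 0)"
    using B i i' unfolding is_inverse_on_def mmul_def by simp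
next
  fix j j' assume j: "j \<in> J'" and j': "j' \<in> J'"
  have "(\<Sum>i\<in>I. B (h j) i * A' i j') = (\<Sum>i\<in>I. B (h j) i * A i (h j'))"
    by (rule sum.cong) (use A j' in auto)
  also have "\<dots> = (if h j = h j' then 1 else 0)"
    using B bij_betwE[OF h] j j' unfolding is_inverse_on_def mmul_def by blast
  finally show "(\<Sum>i\<in>I. B (h j) i * A' i j') = (if j = j' then 1 else 0)"
    using bij_betw_imp_inj_on[OF h] j j' by (simp add: inj_on_eq_iff)
qed

lemma nonsingular_on_bmat_last_column:
  fixes lastc :: "'d::finite mi \<Rightarrow> 'b \<Rightarrow> complex" and lastc' :: "'d mi \<Rightarrow> 'c \<Rightarrow> complex"
  assumes "nonsingular_on I (RCol ` J0 \<union> NCol ` N) (bmat S R p lastc)"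
  shows "nonsingular_on I (RCol ` J0 \<union> NCol ` N) (bmat S R p lastc')"
proof -
  let ?J = "RCol ` J0 \<union> NCol ` N :: ('d mi, 'b) qcol set"
  let ?J' = "RCol ` J0 \<union> NCol ` N :: ('d mi, 'c) qcol set"
  let ?h = "map_qcol id (\<lambda>_. undefined) :: ('d mi, 'c) qcol \<Rightarrow> ('d mi, 'b) qcol"
  obtain B where fin: "finite I" "finite ?J" and B: "is_inverse_on I ?J (bmat S R p lastc) B"
    using assms unfolding nonsingular_on_def by blast
  have h: "bij_betw ?h ?J' ?J"
    by (auto simp: bij_betw_def inj_on_def image_Un image_image)
  then have "is_inverse_on I ?J' (bmat S R p lastc') (\<lambda>j. B (?h j))"
    by (rule is_inverse_on_reindex[OF _ _ B]) (auto simp: bmat_def)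
  moreover have "finite ?J'" using bij_betw_finite[OF h] fin(2) by blast
  ultimately show ?thesis using fin(1) unfolding nonsingular_on_def by blast
qed

lemma bmat_row_combination_qdet_last:
  assumes fin: "finite I" "finite L" "finite J0" and disj: "I \<inter> L = {}"
    and ns: "nonsingular_on I (RCol ` J0 \<union> NCol ` {..<r}) (bmat S R p lastc0)"
    and ann_R: "\<forall>\<beta>\<in>J0. (\<Sum>i\<in>I \<union> L. c i * R i \<beta>) = 0"
    and ann_N: "\<forall>n<r. (\<Sum>i\<in>I \<union> L. c i * mop S i (p n)) = 0"
  shows "(\<Sum>i\<in>I \<union> L. c i * lastc i b) =
     (\<Sum>l\<in>L. c l * qdet_last I L (RCol ` J0 \<union> NCol ` {..<r}) K (bmat S R p lastc) l (LCol b))"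
proof -
  let ?J = "RCol ` J0 \<union> NCol ` {..<r}"
  have inv: "\<exists>B. is_inverse_on I ?J (bmat S R p lastc) B"
    using nonsingular_on_bmat_last_column[OF ns] unfolding nonsingular_on_def by blast
  have ann: "\<forall>j\<in>?J. (\<Sum>i\<in>I \<union> L. c i * bmat S R p lastc i j) = 0"
    using ann_R ann_N by (auto simp: bmat_def)
  have "finite ?J" using fin(3) by simp
  moreover have "\<And>i. bmat S R p lastc i (LCol b) = lastc i b" by (simp add: bmat_def)
  ultimately show ?thesis
    using row_combination_qdet_last[OF fin(1,2) _ disj inv ann, of "LCol b" K] by simp
qed

lemma Rmat_fmul:
  fixes S :: "'d::finite mi \<Rightarrow> 'd mi \<Rightarrow> complex"
  shows "Rmat S (fmul Q w) \<alpha> \<gamma> = (\<Sum>e\<in>psupp Q. Q e * Rmat S w \<alpha> (madd \<gamma> e))"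
proof -
  have "madd (madd \<delta> \<gamma>) e = madd \<delta> (madd \<gamma> e)" for \<delta> e :: "'d mi"
    by (simp add: madd_def add.assoc)
  then show ?thesis
    unfolding Rmat_def fmul_def
    by (simp add: sum_distrib_left sum.swap[of _ "psupp Q"] mult_ac)
qed

lemma sum_Rmat_shift_eq_specQ:
  fixes Sh :: "'d::finite mi \<Rightarrow> 'd mi \<Rightarrow> complex"
  assumes mf: "mop_fact w Sh Hh" and fQ: "finite (psupp Q)"
    and dQ: "\<forall>e\<in>psupp Q. deg_mi \<gamma> + deg_mi e \<le> deg_mi \<alpha>"
  shows "(\<Sum>e\<in>psupp Q. Q e * Rmat Sh w \<alpha> (madd \<gamma> e)) = (\<Sum>\<beta>\<in>blk (deg_mi \<alpha>). Hh \<alpha> \<beta> * specQ Q \<gamma> \<beta>)"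
proof -
  have "Q e * Rmat Sh w \<alpha> (madd \<gamma> e) = (if madd e \<gamma> \<in> blk (deg_mi \<alpha>) then Q e * Hh \<alpha> (madd e \<gamma>) else 0)"
    if "e \<in> psupp Q" for e
    using dQ that Rmat_eq_0_if_deg_less[OF mf] Rmat_eq_H_if_deg_eq[OF mf]
    by (fastforce simp: blk_def madd_commute[of \<gamma> e])
  then have "(\<Sum>e\<in>psupp Q. Q e * Rmat Sh w \<alpha> (madd \<gamma> e))
      = (\<Sum>e\<in>psupp Q. if madd e \<gamma> \<in> blk (deg_mi \<alpha>) then Q e * Hh \<alpha> (madd e \<gamma>) else 0)"
    by simp
  also have "\<dots> = (\<Sum>e\<in>psupp Q. \<Sum>\<beta>\<in>blk (deg_mi \<alpha>). if madd e \<gamma> = \<beta> then Q e * Hh \<alpha> \<beta> else 0)"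
    by (simp add: sum.delta[OF finite_blk])
  also have "\<dots> = (\<Sum>\<beta>\<in>blk (deg_mi \<alpha>). \<Sum>e\<in>psupp Q. if madd e \<gamma> = \<beta> then Q e * Hh \<alpha> \<beta> else 0)"
    by (rule sum.swap)
  also have "\<dots> = (\<Sum>\<beta>\<in>blk (deg_mi \<alpha>). Hh \<alpha> \<beta> * specQ Q \<gamma> \<beta>)"
    unfolding specQ_eq_sum[OF fQ, symmetric]
    by (simp add: sum_distrib_left if_distrib mult.commute cong: if_cong)
  finally show ?thesis .
qed

lemma Rmat_left_cancel_low:
  fixes S :: "'d::finite mi \<Rightarrow> 'd mi \<Rightarrow> complex"
  assumes mf: "mop_fact v S H" and qd: "quasi_definite v"
    and ann: "\<And>\<gamma>. deg_mi \<gamma> < n \<Longrightarrow> (\<Sum>l\<in>{l. deg_mi l \<le> N}. c l * Rmat S v l \<gamma>) = 0"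
    and "n \<le> Suc N" and l0: "deg_mi l0 < n"
  shows "c l0 = 0"
proof (rule H_block_left_cancel[OF mf qd])
  let ?j = "deg_mi l0"
  let ?D = "{l::'d mi. deg_mi l \<le> N}"
  fix l' :: "'d mi" assume l': "l' \<in> blk ?j"
  have "(\<Sum>l\<in>blk ?j. c l * H l l') = (\<Sum>l\<in>?D. c l * H l l')"
    by (rule sum.mono_neutral_left) (use l' assms mop_factD(2)[OF mf] in \<open>auto simp: blk_def\<close>)
  also have "\<dots> = (\<Sum>\<gamma>\<in>{\<gamma>. deg_mi \<gamma> \<le> ?j}. (\<Sum>l\<in>?D. c l * Rmat S v l \<gamma>) * S l' \<gamma>)"
    using l' unfolding mop_factD(3)[OF mf, symmetric]
    by (simp add: blk_def sum_distrib_left sum_distrib_right sum.swap[of _ ?D] mult_ac)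
  also have "\<dots> = 0"
    by (rule sum.neutral) (use l0 ann in auto)
  finally show "(\<Sum>l\<in>blk ?j. c l * H l l') = 0" .
qed (simp add: blk_def)

text \<open>\<open>c\<close> holds the coefficients of \<open>Q P\<^sup>^\<^sub>\<alpha>\<close> in the basis \<open>P\<^sub>l\<close>, \<open>|l| \<le> N\<close>, of the monic polynomials
  defined by \<open>S\<close>, where \<open>P\<^sup>^\<^sub>\<alpha>\<close> is defined by \<open>Sh\<close>; the polynomial identity is stated coefficientwise,
  by pairing both sides with an arbitrary sequence \<open>\<phi>\<close> indexed by monomials.\<close>

definition expansion_coeffs :: "('d::finite mi \<Rightarrow> 'd mi \<Rightarrow> complex) \<Rightarrow> nat \<Rightarrow> ('d mi \<Rightarrow> complex)
    \<Rightarrow> 'd mpoly \<Rightarrow> ('d mi \<Rightarrow> 'd mi \<Rightarrow> complex) \<Rightarrow> 'd mi \<Rightarrow> bool" where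
  "expansion_coeffs S N c Q Sh \<alpha> \<longleftrightarrow>
     (\<forall>\<phi>. (\<Sum>l\<in>{l. deg_mi l \<le> N}. c l * (\<Sum>\<beta>\<in>{\<beta>. deg_mi \<beta> \<le> deg_mi l}. S l \<beta> * \<phi> \<beta>)) =
          (\<Sum>a\<in>psupp Q. \<Sum>b\<in>{b. deg_mi b \<le> deg_mi \<alpha>}. Q a * Sh \<alpha> b * \<phi> (madd a b)))"

lemma expansion_coeffs_mop:
  assumes "expansion_coeffs S N c Q Sh \<alpha>"
  shows "(\<Sum>l\<in>{l. deg_mi l \<le> N}. c l * mop S l x) = peval Q x * mop Sh \<alpha> x"
  using assms[unfolded expansion_coeffs_def, rule_format, of "\<lambda>\<beta>. mono \<beta> x"]
  unfolding mop_def peval_def sum_product by (simp add: mono_madd mult_ac)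

lemma expansion_coeffs_Rmat:
  assumes "expansion_coeffs S N c Q Sh \<alpha>"
  shows "(\<Sum>l\<in>{l. deg_mi l \<le> N}. c l * Rmat S w l \<gamma>) = Rmat Sh (fmul Q w) \<alpha> \<gamma>"
proof -
  have "madd (madd a b) \<gamma> = madd (madd b \<gamma>) a" for a b :: "'a mi"
    by (simp add: madd_def fun_eq_iff add_ac)
  then show ?thesis
    using assms[unfolded expansion_coeffs_def, rule_format, of "\<lambda>\<beta>. w (madd \<beta> \<gamma>)"]
    unfolding Rmat_def fmul_def
    by (simp add: sum_distrib_left sum.swap[of _ "psupp Q"] mult_ac)
qed

definition mult_mop_coeff :: "'d::finite mpoly \<Rightarrow> ('d mi \<Rightarrow> 'd mi \<Rightarrow> complex) \<Rightarrow> 'd mi \<Rightarrow> 'd mi \<Rightarrow> complex" where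
  "mult_mop_coeff Q Sh \<alpha> \<gamma> =
     (\<Sum>a\<in>psupp Q. \<Sum>b\<in>{b. deg_mi b \<le> deg_mi \<alpha>}. if madd a b = \<gamma> then Q a * Sh \<alpha> b else 0)"

lemma mult_mop_coeff_eq_0:
  assumes "\<forall>a\<in>psupp Q. deg_mi a \<le> m" and "deg_mi \<alpha> + m < deg_mi \<gamma>"
  shows "mult_mop_coeff Q Sh \<alpha> \<gamma> = 0"
  using assms unfolding mult_mop_coeff_def by (fastforce intro!: sum.neutral)

lemma mult_mop_coeff_top:
  fixes Sh :: "'d::finite mi \<Rightarrow> 'd mi \<Rightarrow> complex"
  assumes Uh: "block_unitriangular Sh"
    and fQ: "finite (psupp Q)" and dQ: "\<forall>a\<in>psupp Q. deg_mi a \<le> m"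
    and \<gamma>: "deg_mi \<gamma> = deg_mi \<alpha> + m"
  shows "mult_mop_coeff Q Sh \<alpha> \<gamma> = specQ Q \<alpha> \<gamma>"
proof -
  let ?Dk = "{b::'d mi. deg_mi b \<le> deg_mi \<alpha>}"
  have only_\<alpha>: "(if madd a b = \<gamma> then Q a * Sh \<alpha> b else 0) = (if b = \<alpha> then (if madd a \<alpha> = \<gamma> then Q a else 0) else 0)"
    if a: "a \<in> psupp Q" and b: "b \<in> ?Dk" for a b
  proof (cases "b = \<alpha> \<or> madd a b \<noteq> \<gamma>")
    case True then show ?thesis by (auto simp: block_unitriangularD(2)[OF Uh])
  next
    case False
    then have "deg_mi a + deg_mi b = deg_mi \<alpha> + m" using \<gamma> by auto
    then have "deg_mi b = deg_mi \<alpha>" using dQ a b by fastforce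
    then show ?thesis using False block_unitriangularD(2)[OF Uh, of \<alpha> b] by auto
  qed
  have "mult_mop_coeff Q Sh \<alpha> \<gamma> = (\<Sum>a\<in>psupp Q. if madd a \<alpha> = \<gamma> then Q a else 0)"
    unfolding mult_mop_coeff_def
  proof (rule sum.cong[OF refl])
    fix a assume "a \<in> psupp Q"
    then have "(\<Sum>b\<in>?Dk. if madd a b = \<gamma> then Q a * Sh \<alpha> b else 0)
        = (\<Sum>b\<in>?Dk. if b = \<alpha> then (if madd a \<alpha> = \<gamma> then Q a else 0) else 0)"
      by (intro sum.cong refl) (simp add: only_\<alpha>)
    then show "(\<Sum>b\<in>?Dk. if madd a b = \<gamma> then Q a * Sh \<alpha> b else 0) = (if madd a \<alpha> = \<gamma> then Q a else 0)"
      by simp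
  qed
  then show ?thesis using specQ_eq_sum[OF fQ] by simp
qed

lemma sum_mult_mop_coeff:
  assumes dQ: "\<forall>a\<in>psupp Q. deg_mi a \<le> m" and N: "deg_mi \<alpha> + m \<le> N"
  shows "(\<Sum>\<beta>\<in>{\<beta>. deg_mi \<beta> \<le> N}. mult_mop_coeff Q Sh \<alpha> \<beta> * \<phi> \<beta>)
    = (\<Sum>a\<in>psupp Q. \<Sum>b\<in>{b. deg_mi b \<le> deg_mi \<alpha>}. Q a * Sh \<alpha> b * \<phi> (madd a b))"
proof -
  let ?Dk = "{b::'a mi. deg_mi b \<le> deg_mi \<alpha>}" and ?DN = "{b::'a mi. deg_mi b \<le> N}"
  have "(\<Sum>\<beta>\<in>?DN. mult_mop_coeff Q Sh \<alpha> \<beta> * \<phi> \<beta>)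
      = (\<Sum>\<beta>\<in>?DN. \<Sum>a\<in>psupp Q. \<Sum>b\<in>?Dk. if madd a b = \<beta> then Q a * Sh \<alpha> b * \<phi> \<beta> else 0)"
    unfolding mult_mop_coeff_def sum_distrib_right by (intro sum.cong refl) simp
  also have "\<dots> = (\<Sum>a\<in>psupp Q. \<Sum>\<beta>\<in>?DN. \<Sum>b\<in>?Dk. if madd a b = \<beta> then Q a * Sh \<alpha> b * \<phi> \<beta> else 0)"
    by (rule sum.swap)
  also have "\<dots> = (\<Sum>a\<in>psupp Q. \<Sum>b\<in>?Dk. \<Sum>\<beta>\<in>?DN. if madd a b = \<beta> then Q a * Sh \<alpha> b * \<phi> \<beta> else 0)"
    by (rule sum.cong[OF refl], rule sum.swap)
  also have "\<dots> = (\<Sum>a\<in>psupp Q. \<Sum>b\<in>?Dk. Q a * Sh \<alpha> b * \<phi> (madd a b))"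
    using dQ N by (intro sum.cong refl) (fastforce simp: sum.delta)
  finally show ?thesis .
qed

lemma expansion_coeffs_exist:
  fixes S Sh :: "'d::finite mi \<Rightarrow> 'd mi \<Rightarrow> complex"
  assumes U: "block_unitriangular S" and Uh: "block_unitriangular Sh"
    and fQ: "finite (psupp Q)" and dQ: "\<forall>a\<in>psupp Q. deg_mi a \<le> m"
  shows "\<exists>c. expansion_coeffs S (deg_mi \<alpha> + m) c Q Sh \<alpha> \<and> (\<forall>l\<in>blk (deg_mi \<alpha> + m). c l = specQ Q \<alpha> l)"
proof -
  let ?N = "deg_mi \<alpha> + m"
  let ?DN = "{b::'d mi. deg_mi b \<le> ?N}"
  let ?T = "mult_mop_coeff Q Sh \<alpha>"
  have T_high: "\<forall>\<gamma>. Suc ?N \<le> deg_mi \<gamma> \<longrightarrow> ?T \<gamma> = 0"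
    using mult_mop_coeff_eq_0[OF dQ] by simp
  obtain c where c: "\<And>\<gamma>. (\<Sum>l\<in>{l. deg_mi l < Suc ?N}. c l * S l \<gamma>) = ?T \<gamma>"
    and c_top: "\<And>l. deg_mi l = ?N \<Longrightarrow> c l = ?T l"
    using block_unitriangular_row_solve[OF U T_high] by auto
  have "expansion_coeffs S ?N c Q Sh \<alpha>"
    unfolding expansion_coeffs_def
  proof
    fix \<phi> :: "'d mi \<Rightarrow> complex"
    have "(\<Sum>l\<in>?DN. c l * (\<Sum>\<beta>\<in>{\<beta>. deg_mi \<beta> \<le> deg_mi l}. S l \<beta> * \<phi> \<beta>))
        = (\<Sum>l\<in>?DN. c l * (\<Sum>\<beta>\<in>?DN. S l \<beta> * \<phi> \<beta>))"
    proof (rule sum.cong[OF refl])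
      fix l assume "l \<in> ?DN"
      then have "(\<Sum>\<beta>\<in>{\<beta>. deg_mi \<beta> \<le> deg_mi l}. S l \<beta> * \<phi> \<beta>) = (\<Sum>\<beta>\<in>?DN. S l \<beta> * \<phi> \<beta>)"
        by (intro sum.mono_neutral_left) (auto simp: block_unitriangularD(1)[OF U])
      then show "c l * (\<Sum>\<beta>\<in>{\<beta>. deg_mi \<beta> \<le> deg_mi l}. S l \<beta> * \<phi> \<beta>) = c l * (\<Sum>\<beta>\<in>?DN. S l \<beta> * \<phi> \<beta>)"
        by simp
    qed
    also have "\<dots> = (\<Sum>\<beta>\<in>?DN. (\<Sum>l\<in>?DN. c l * S l \<beta>) * \<phi> \<beta>)"
      unfolding sum_distrib_left sum_distrib_right by (subst sum.swap) (simp add: mult_ac)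
    also have "\<dots> = (\<Sum>\<beta>\<in>?DN. ?T \<beta> * \<phi> \<beta>)"
      using c by (simp add: less_Suc_eq_le)
    finally show "(\<Sum>l\<in>?DN. c l * (\<Sum>\<beta>\<in>{\<beta>. deg_mi \<beta> \<le> deg_mi l}. S l \<beta> * \<phi> \<beta>))
        = (\<Sum>a\<in>psupp Q. \<Sum>b\<in>{b. deg_mi b \<le> deg_mi \<alpha>}. Q a * Sh \<alpha> b * \<phi> (madd a b))"
      using sum_mult_mop_coeff[OF dQ order_refl] by simp
  qed
  moreover have "\<forall>l\<in>blk ?N. c l = specQ Q \<alpha> l"
    using c_top mult_mop_coeff_top[OF Uh fQ dQ] by (simp add: blk_def)
  ultimately show ?thesis by blast
qed

lemma expansion_coeffs_Rmat_fmul: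
  assumes "expansion_coeffs S N c Q Sh \<alpha>"
  shows "(\<Sum>l\<in>{l. deg_mi l \<le> N}. c l * Rmat S (fmul Q' w) l \<gamma>)
    = (\<Sum>e\<in>psupp Q'. Q' e * Rmat Sh (fmul Q w) \<alpha> (madd \<gamma> e))"
proof -
  have "(\<Sum>l\<in>{l. deg_mi l \<le> N}. c l * Rmat S (fmul Q' w) l \<gamma>)
      = (\<Sum>e\<in>psupp Q'. Q' e * (\<Sum>l\<in>{l. deg_mi l \<le> N}. c l * Rmat S w l (madd \<gamma> e)))"
    unfolding Rmat_fmul sum_distrib_left by (subst sum.swap) (simp add: mult_ac)
  then show ?thesis by (simp add: expansion_coeffs_Rmat[OF assms])
qed

lemma expansion_qdet_formulas:
  fixes S Sh Hh :: "'d::finite mi \<Rightarrow> 'd mi \<Rightarrow> complex"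
  assumes mfh: "mop_fact (fmul Q w) Sh Hh"
    and exp: "expansion_coeffs S N c Q Sh \<alpha>"
    and top: "\<forall>l\<in>L. c l = specQ Q \<alpha> l"
    and rows: "I \<union> L \<subseteq> {l. deg_mi l \<le> N}"
    and supp: "\<forall>l. deg_mi l \<le> N \<longrightarrow> l \<notin> I \<union> L \<longrightarrow> c l = 0"
    and fin: "finite I" "finite L" "finite J0" and disj: "I \<inter> L = {}"
    and J0: "\<forall>\<beta>\<in>J0. deg_mi \<beta> < deg_mi \<alpha>"
    and ns: "nonsingular_on I (RCol ` J0 \<union> NCol ` {..<r}) (bmat S (Rmat S w) p lastc0)"
    and nodes: "\<forall>n<r. peval Q (p n) = 0"
  shows "(\<Sum>i\<in>{l. deg_mi l \<le> N}. c i * lastc i b) =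
      (\<Sum>l\<in>L. specQ Q \<alpha> l * qdet_last I L (RCol ` J0 \<union> NCol ` {..<r}) K (bmat S (Rmat S w) p lastc) l (LCol b))"
    and "peval Q x \<noteq> 0 \<Longrightarrow> mop Sh \<alpha> x = 1 / peval Q x *
      (\<Sum>l\<in>L. specQ Q \<alpha> l * qdet_last I L (RCol ` J0 \<union> NCol ` {..<r}) K1
                                (bmat S (Rmat S w) p (\<lambda>\<gamma> _. mop S \<gamma> x)) l (LCol ()))"
    and "deg_mi \<beta> = deg_mi \<alpha> \<Longrightarrow> Hh \<alpha> \<beta> =
      (\<Sum>l\<in>L. specQ Q \<alpha> l * qdet_last I L (RCol ` J0 \<union> NCol ` {..<r}) K2
                                (bmat S (Rmat S w) p (Rmat S w)) l (LCol \<beta>))"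
proof -
  have sums: "(\<Sum>i\<in>I \<union> L. c i * f i) = (\<Sum>i\<in>{l. deg_mi l \<le> N}. c i * f i)" for f
    by (rule sum.mono_neutral_left) (use rows supp in auto)
  have ann_R: "\<forall>\<beta>\<in>J0. (\<Sum>i\<in>I \<union> L. c i * Rmat S w i \<beta>) = 0"
    using J0 by (simp add: sums expansion_coeffs_Rmat[OF exp] Rmat_eq_0_if_deg_less[OF mfh])
  have ann_N: "\<forall>n<r. (\<Sum>i\<in>I \<union> L. c i * mop S i (p n)) = 0"
    using nodes by (simp add: sums expansion_coeffs_mop[OF exp])
  have top_sum: "(\<Sum>l\<in>L. c l * f l) = (\<Sum>l\<in>L. specQ Q \<alpha> l * f l)" for f
    by (rule sum.cong) (use top in auto)
  have row: "(\<Sum>i\<in>{l. deg_mi l \<le> N}. c i * lastc' i b') =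
      (\<Sum>l\<in>L. specQ Q \<alpha> l * qdet_last I L (RCol ` J0 \<union> NCol ` {..<r}) K' (bmat S (Rmat S w) p lastc') l (LCol b'))"
    for lastc' :: "'d mi \<Rightarrow> 'e \<Rightarrow> complex" and b' K'
    using bmat_row_combination_qdet_last[OF fin disj ns ann_R ann_N, of lastc' b' K']
    by (simp add: sums top_sum)
  then show "(\<Sum>i\<in>{l. deg_mi l \<le> N}. c i * lastc i b) =
      (\<Sum>l\<in>L. specQ Q \<alpha> l * qdet_last I L (RCol ` J0 \<union> NCol ` {..<r}) K (bmat S (Rmat S w) p lastc) l (LCol b))" .
  show "mop Sh \<alpha> x = 1 / peval Q x *
      (\<Sum>l\<in>L. specQ Q \<alpha> l * qdet_last I L (RCol ` J0 \<union> NCol ` {..<r}) K1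
                                (bmat S (Rmat S w) p (\<lambda>\<gamma> _. mop S \<gamma> x)) l (LCol ()))"
    if "peval Q x \<noteq> 0"
    using row[of "\<lambda>\<gamma> _. mop S \<gamma> x" "()" K1] that
    by (simp add: expansion_coeffs_mop[OF exp] field_simps)
  show "Hh \<alpha> \<beta> =
      (\<Sum>l\<in>L. specQ Q \<alpha> l * qdet_last I L (RCol ` J0 \<union> NCol ` {..<r}) K2
                                (bmat S (Rmat S w) p (Rmat S w)) l (LCol \<beta>))"
    if "deg_mi \<beta> = deg_mi \<alpha>"
    using row[of "Rmat S w" \<beta> K2] Rmat_eq_H_if_deg_eq[OF mfh that]
    by (simp add: expansion_coeffs_Rmat[OF exp])
qed

lemma perturbed_mop_formulas_i:
  fixes S Sh Hh :: "'d::finite mi \<Rightarrow> 'd mi \<Rightarrow> complex"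
  assumes U: "block_unitriangular S" and mfh: "mop_fact (fmul Q w) Sh Hh"
    and fQ: "finite (psupp Q)" and dQ: "\<forall>a\<in>psupp Q. deg_mi a \<le> m"
    and nodes: "\<forall>n<r. peval Q (p n) = 0"
    and ns: "nonsingular_on {\<alpha>. deg_mi \<alpha> < k + m} (RCol ` {\<beta>. deg_mi \<beta> < k} \<union> NCol ` {..<r})
               (bmat S (Rmat S w) p lastc0)"
  shows "(\<forall>x. peval Q x \<noteq> 0 \<longrightarrow> (\<forall>\<alpha>\<in>blk k.
           mop Sh \<alpha> x = (1 / peval Q x) *
             (\<Sum>l\<in>blk (k + m). specQ Q \<alpha> l *
                qdet_last {\<alpha>. deg_mi \<alpha> < k + m} (blk (k + m))
                   (RCol ` {\<beta>. deg_mi \<beta> < k} \<union> NCol ` {..<r}) {LCol ()}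
                   (bmat S (Rmat S w) p (\<lambda>\<gamma> _. mop S \<gamma> x)) l (LCol ())))) \<and>
         (\<forall>\<alpha>\<in>blk k. \<forall>\<beta>\<in>blk k.
           Hh \<alpha> \<beta> = (\<Sum>l\<in>blk (k + m). specQ Q \<alpha> l *
                qdet_last {\<alpha>. deg_mi \<alpha> < k + m} (blk (k + m))
                   (RCol ` {\<beta>. deg_mi \<beta> < k} \<union> NCol ` {..<r}) (LCol ` blk k)
                   (bmat S (Rmat S w) p (Rmat S w)) l (LCol \<beta>)))"
proof -
  have "(\<forall>x. peval Q x \<noteq> 0 \<longrightarrow>
           mop Sh \<alpha> x = (1 / peval Q x) *
             (\<Sum>l\<in>blk (k + m). specQ Q \<alpha> l *
                qdet_last {\<alpha>. deg_mi \<alpha> < k + m} (blk (k + m))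
                   (RCol ` {\<beta>. deg_mi \<beta> < k} \<union> NCol ` {..<r}) {LCol ()}
                   (bmat S (Rmat S w) p (\<lambda>\<gamma> _. mop S \<gamma> x)) l (LCol ()))) \<and>
         (\<forall>\<beta>\<in>blk k.
           Hh \<alpha> \<beta> = (\<Sum>l\<in>blk (k + m). specQ Q \<alpha> l *
                qdet_last {\<alpha>. deg_mi \<alpha> < k + m} (blk (k + m))
                   (RCol ` {\<beta>. deg_mi \<beta> < k} \<union> NCol ` {..<r}) (LCol ` blk k)
                   (bmat S (Rmat S w) p (Rmat S w)) l (LCol \<beta>)))"
    if \<alpha>: "\<alpha> \<in> blk k" for \<alpha>
  proof -
    obtain c where exp: "expansion_coeffs S (k + m) c Q Sh \<alpha>"
      and top: "\<forall>l\<in>blk (k + m). c l = specQ Q \<alpha> l"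
      using expansion_coeffs_exist[OF U mop_factD(1)[OF mfh] fQ dQ, of \<alpha>] \<alpha> by (auto simp: blk_def)
    have rows: "{\<alpha>. deg_mi \<alpha> < k + m} \<union> blk (k + m) \<subseteq> {l. deg_mi l \<le> k + m}"
      and supp: "\<forall>l. deg_mi l \<le> k + m \<longrightarrow> l \<notin> {\<alpha>. deg_mi \<alpha> < k + m} \<union> blk (k + m) \<longrightarrow> c l = 0"
      and disj: "{\<alpha>. deg_mi \<alpha> < k + m} \<inter> blk (k + m) = {}"
      and J0: "\<forall>\<beta>\<in>{\<beta>. deg_mi \<beta> < k}. deg_mi \<beta> < deg_mi \<alpha>"
      using \<alpha> by (auto simp: blk_def)
    note formulas = expansion_qdet_formulas[OF mfh exp top rows supp
        finite_deg_mi_less finite_blk finite_deg_mi_less disj J0 ns nodes]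
    show ?thesis using formulas(2,3) \<alpha> by (simp add: blk_def)
  qed
  then show ?thesis by blast
qed

lemma perturbed_mop_formulas_ii:
  fixes S H Sh Hh :: "'d::finite mi \<Rightarrow> 'd mi \<Rightarrow> complex"
  assumes mfu: "mop_fact (fmul Q2 w) S H" and qdu: "quasi_definite (fmul Q2 w)"
    and mfh: "mop_fact (fmul Q1 w) Sh Hh"
    and fQ1: "finite (psupp Q1)" and dQ1: "\<forall>a\<in>psupp Q1. deg_mi a \<le> m1"
    and fQ2: "finite (psupp Q2)" and dQ2: "\<forall>a\<in>psupp Q2. deg_mi a \<le> m2"
    and nodes: "\<forall>n<r. peval Q1 (p n) = 0"
    and km: "m2 \<le> k" and fM: "finite M" and M: "\<forall>\<beta>\<in>M. deg_mi \<beta> < k"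
    and ns: "nonsingular_on {\<alpha>. k - m2 \<le> deg_mi \<alpha> \<and> deg_mi \<alpha> < k + m1} (RCol ` M \<union> NCol ` {..<r})
               (bmat S (Rmat S w) p lastc0)"
  shows "(\<forall>x. peval Q1 x \<noteq> 0 \<longrightarrow> (\<forall>\<alpha>\<in>blk k.
           mop Sh \<alpha> x = (1 / peval Q1 x) *
             (\<Sum>l\<in>blk (k + m1). specQ Q1 \<alpha> l *
                qdet_last {\<alpha>. k - m2 \<le> deg_mi \<alpha> \<and> deg_mi \<alpha> < k + m1} (blk (k + m1))
                   (RCol ` M \<union> NCol ` {..<r}) {LCol ()}
                   (bmat S (Rmat S w) p (\<lambda>\<gamma> _. mop S \<gamma> x)) l (LCol ())))) \<and>
         (\<forall>\<alpha>\<in>blk k. \<forall>\<gamma>\<in>blk (k - m2).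
           (\<Sum>\<beta>\<in>blk k. Hh \<alpha> \<beta> * specQ Q2 \<gamma> \<beta>) =
             (\<Sum>l\<in>blk (k + m1). specQ Q1 \<alpha> l *
                qdet_last {\<alpha>. k - m2 \<le> deg_mi \<alpha> \<and> deg_mi \<alpha> < k + m1} (blk (k + m1))
                   (RCol ` M \<union> NCol ` {..<r}) (LCol ` blk (k - m2))
                   (bmat S (Rmat S w) p (\<lambda>\<delta> \<epsilon>. if deg_mi \<delta> = k - m2 then H \<delta> \<epsilon> else 0)) l (LCol \<gamma>))) \<and>
         (\<forall>\<alpha>\<in>blk k. \<forall>\<beta>\<in>blk k.
           Hh \<alpha> \<beta> = (\<Sum>l\<in>blk (k + m1). specQ Q1 \<alpha> l *
                qdet_last {\<alpha>. k - m2 \<le> deg_mi \<alpha> \<and> deg_mi \<alpha> < k + m1} (blk (k + m1))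
                   (RCol ` M \<union> NCol ` {..<r}) (LCol ` blk k)
                   (bmat S (Rmat S w) p (Rmat S w)) l (LCol \<beta>)))"
proof -
  let ?I = "{\<alpha>::'d mi. k - m2 \<le> deg_mi \<alpha> \<and> deg_mi \<alpha> < k + m1}"
  let ?D = "{l::'d mi. deg_mi l \<le> k + m1}"
  let ?J = "RCol ` M \<union> NCol ` {..<r}"
  have "(\<forall>x. peval Q1 x \<noteq> 0 \<longrightarrow>
           mop Sh \<alpha> x = (1 / peval Q1 x) *
             (\<Sum>l\<in>blk (k + m1). specQ Q1 \<alpha> l *
                qdet_last ?I (blk (k + m1)) ?J {LCol ()} (bmat S (Rmat S w) p (\<lambda>\<gamma> _. mop S \<gamma> x)) l (LCol ()))) \<and>
         (\<forall>\<gamma>\<in>blk (k - m2).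
           (\<Sum>\<beta>\<in>blk k. Hh \<alpha> \<beta> * specQ Q2 \<gamma> \<beta>) =
             (\<Sum>l\<in>blk (k + m1). specQ Q1 \<alpha> l *
                qdet_last ?I (blk (k + m1)) ?J (LCol ` blk (k - m2))
                   (bmat S (Rmat S w) p (\<lambda>\<delta> \<epsilon>. if deg_mi \<delta> = k - m2 then H \<delta> \<epsilon> else 0)) l (LCol \<gamma>))) \<and>
         (\<forall>\<beta>\<in>blk k.
           Hh \<alpha> \<beta> = (\<Sum>l\<in>blk (k + m1). specQ Q1 \<alpha> l *
                qdet_last ?I (blk (k + m1)) ?J (LCol ` blk k) (bmat S (Rmat S w) p (Rmat S w)) l (LCol \<beta>)))"
    if \<alpha>: "\<alpha> \<in> blk k" for \<alpha>
  proof -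
    obtain c where exp: "expansion_coeffs S (k + m1) c Q1 Sh \<alpha>"
      and top: "\<forall>l\<in>blk (k + m1). c l = specQ Q1 \<alpha> l"
      using expansion_coeffs_exist[OF mop_factD(1)[OF mfu] mop_factD(1)[OF mfh] fQ1 dQ1, of \<alpha>] \<alpha>
      by (auto simp: blk_def)
    have ann: "(\<Sum>l\<in>?D. c l * Rmat S (fmul Q2 w) l \<gamma>) = 0" if "deg_mi \<gamma> < k - m2" for \<gamma>
      unfolding expansion_coeffs_Rmat_fmul[OF exp]
      using that dQ2 km \<alpha> Rmat_eq_0_if_deg_less[OF mfh]
      by (intro sum.neutral ballI) (fastforce simp: blk_def)
    have "k - m2 \<le> Suc (k + m1)" by simp
    then have low: "c l = 0" if "deg_mi l < k - m2" for l
      using Rmat_left_cancel_low[OF mfu qdu ann _ that] by blast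
    have rows: "?I \<union> blk (k + m1) \<subseteq> ?D"
      and supp: "\<forall>l. deg_mi l \<le> k + m1 \<longrightarrow> l \<notin> ?I \<union> blk (k + m1) \<longrightarrow> c l = 0"
      and disj: "?I \<inter> blk (k + m1) = {}"
      and J0: "\<forall>\<beta>\<in>M. deg_mi \<beta> < deg_mi \<alpha>"
      using \<alpha> M low by (auto simp: blk_def)
    note formulas = expansion_qdet_formulas[OF mfh exp top rows supp
        finite_deg_mi_between finite_blk fM disj J0 ns nodes]
    have "(\<Sum>\<beta>\<in>blk k. Hh \<alpha> \<beta> * specQ Q2 \<gamma> \<beta>) =
             (\<Sum>l\<in>blk (k + m1). specQ Q1 \<alpha> l *
                qdet_last ?I (blk (k + m1)) ?J (LCol ` blk (k - m2))
                   (bmat S (Rmat S w) p (\<lambda>\<delta> \<epsilon>. if deg_mi \<delta> = k - m2 then H \<delta> \<epsilon> else 0)) l (LCol \<gamma>))"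
      if \<gamma>: "\<gamma> \<in> blk (k - m2)" for \<gamma>
    proof -
      have "(\<Sum>i\<in>?D. c i * (if deg_mi i = k - m2 then H i \<gamma> else 0)) = (\<Sum>i\<in>?D. c i * Rmat S (fmul Q2 w) i \<gamma>)"
      proof (rule sum.cong[OF refl])
        fix i assume "i \<in> ?D"
        show "c i * (if deg_mi i = k - m2 then H i \<gamma> else 0) = c i * Rmat S (fmul Q2 w) i \<gamma>"
        proof (cases "deg_mi i < k - m2")
          case False
          then show ?thesis using H_column_eq_Rmat[OF mfu, of \<gamma> i] \<gamma> by (simp add: blk_def)
        qed (simp add: low)
      qed
      also have "\<dots> = (\<Sum>e\<in>psupp Q2. Q2 e * Rmat Sh (fmul Q1 w) \<alpha> (madd \<gamma> e))"
        by (rule expansion_coeffs_Rmat_fmul[OF exp])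
      also have "\<dots> = (\<Sum>\<beta>\<in>blk k. Hh \<alpha> \<beta> * specQ Q2 \<gamma> \<beta>)"
        using sum_Rmat_shift_eq_specQ[OF mfh fQ2, of \<gamma> \<alpha>] \<alpha> \<gamma> dQ2 km by (fastforce simp: blk_def)
      finally show ?thesis
        using formulas(1)[where lastc = "\<lambda>\<delta> \<epsilon>. if deg_mi \<delta> = k - m2 then H \<delta> \<epsilon> else 0" and b = \<gamma>]
        by simp
    qed
    then show ?thesis using formulas(2,3) \<alpha> by (simp add: blk_def)
  qed
  then show ?thesis by blast
qed

theorem mainTheorem6:
  fixes u :: "(real^'d::finite \<Rightarrow> complex) \<Rightarrow> complex"
    and Q1 Q2 :: "'d mpoly"
    and uc :: "'d mi \<Rightarrow> complex"
    and S H Sh Hh :: "'d mi \<Rightarrow> 'd mi \<Rightarrow> complex"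
    and k :: nat
    and p :: "nat \<Rightarrow> 'd \<Rightarrow> complex"
  defines "m1 \<equiv> pdeg Q1"
    and "m2 \<equiv> pdeg Q2"
    and "uh \<equiv> fmul Q1 uc"
    and "R \<equiv> Rmat S uc"
    and "r1 \<equiv> Nk CARD('d) (int k + int (pdeg Q1) - 1) - Nk CARD('d) (int k - 1)"
    and "F \<equiv> specQ Q1"
  assumes fd: "fast_decreasing_distribution u"
    and polys: "is_poly Q1" "is_poly Q2"
    and cop: "coprime_poly Q1 Q2"
    and supp: "\<forall>x\<in>dist_supp u. peval Q2 (\<lambda>a. complex_of_real (x $ a)) \<noteq> 0"
    and check: "fmul Q2 uc = dmom u"
    and qd: "quasi_definite (dmom u)" "quasi_definite uh"
    and fact: "mop_fact (dmom u) S H" "mop_fact uh Sh Hh"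
    and nodes_inj: "inj_on p {..<r1}"
    and nodes_zero: "\<forall>j<r1. peval Q1 (p j) = 0"
  shows
   "(nonsingular_on {\<alpha>. deg_mi \<alpha> < k + m1} (RCol ` {\<beta>. deg_mi \<beta> < k} \<union> NCol ` {..<r1})
        (bmat S R p (\<lambda>_ _. 0 :: complex)) \<longrightarrow>
      (\<forall>x. peval Q1 x \<noteq> 0 \<longrightarrow> (\<forall>\<alpha>\<in>blk k.
         mop Sh \<alpha> x = (1 / peval Q1 x) *
           (\<Sum>r\<in>blk (k + m1). F \<alpha> r *
              qdet_last {\<alpha>. deg_mi \<alpha> < k + m1} (blk (k + m1))
                 (RCol ` {\<beta>. deg_mi \<beta> < k} \<union> NCol ` {..<r1}) {LCol ()}
                 (bmat S R p (\<lambda>\<gamma> _. mop S \<gamma> x)) r (LCol ())))) \<and>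
      (\<forall>\<alpha>\<in>blk k. \<forall>\<beta>\<in>blk k.
         Hh \<alpha> \<beta> = (\<Sum>r\<in>blk (k + m1). F \<alpha> r *
              qdet_last {\<alpha>. deg_mi \<alpha> < k + m1} (blk (k + m1))
                 (RCol ` {\<beta>. deg_mi \<beta> < k} \<union> NCol ` {..<r1}) (LCol ` blk k)
                 (bmat S R p R) r (LCol \<beta>))))
    \<and>
    (\<forall>M :: 'd mi set. k \<ge> m2 \<and> finite M \<and>
        card M = Nk CARD('d) (int k - 1) - Nk CARD('d) (int k - int m2 - 1) \<and>
        (\<forall>\<beta>\<in>M. deg_mi \<beta> < k) \<and>
        nonsingular_on {\<alpha>. k - m2 \<le> deg_mi \<alpha> \<and> deg_mi \<alpha> < k + m1} (RCol ` M \<union> NCol ` {..<r1})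
          (bmat S R p (\<lambda>_ _. 0 :: complex)) \<longrightarrow>
      (\<forall>x. peval Q1 x \<noteq> 0 \<longrightarrow> (\<forall>\<alpha>\<in>blk k.
         mop Sh \<alpha> x = (1 / peval Q1 x) *
           (\<Sum>r\<in>blk (k + m1). F \<alpha> r *
              qdet_last {\<alpha>. k - m2 \<le> deg_mi \<alpha> \<and> deg_mi \<alpha> < k + m1} (blk (k + m1))
                 (RCol ` M \<union> NCol ` {..<r1}) {LCol ()}
                 (bmat S R p (\<lambda>\<gamma> _. mop S \<gamma> x)) r (LCol ())))) \<and>
      (\<forall>\<alpha>\<in>blk k. \<forall>\<gamma>\<in>blk (k - m2).
         (\<Sum>\<beta>\<in>blk k. Hh \<alpha> \<beta> * specQ Q2 \<gamma> \<beta>) =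
           (\<Sum>r\<in>blk (k + m1). F \<alpha> r *
              qdet_last {\<alpha>. k - m2 \<le> deg_mi \<alpha> \<and> deg_mi \<alpha> < k + m1} (blk (k + m1))
                 (RCol ` M \<union> NCol ` {..<r1}) (LCol ` blk (k - m2))
                 (bmat S R p (\<lambda>\<delta> \<epsilon>. if deg_mi \<delta> = k - m2 then H \<delta> \<epsilon> else 0)) r (LCol \<gamma>))) \<and>
      (\<forall>\<alpha>\<in>blk k. \<forall>\<beta>\<in>blk k.
         Hh \<alpha> \<beta> = (\<Sum>r\<in>blk (k + m1). F \<alpha> r *
              qdet_last {\<alpha>. k - m2 \<le> deg_mi \<alpha> \<and> deg_mi \<alpha> < k + m1} (blk (k + m1))
                 (RCol ` M \<union> NCol ` {..<r1}) (LCol ` blk k)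
                 (bmat S R p R) r (LCol \<beta>))))"
proof -
  have fQ1: "finite (psupp Q1)" and fQ2: "finite (psupp Q2)"
    using polys by (simp_all add: is_poly_def)
  have dQ1: "\<forall>a\<in>psupp Q1. deg_mi a \<le> m1" and dQ2: "\<forall>a\<in>psupp Q2. deg_mi a \<le> m2"
    unfolding m1_def m2_def pdeg_def using fQ1 fQ2 by (auto intro: Max_ge)
  have mfu: "mop_fact (fmul Q2 uc) S H" and qdu: "quasi_definite (fmul Q2 uc)"
    using fact(1) qd(1) check by simp_all
  have mfh: "mop_fact (fmul Q1 uc) Sh Hh"
    using fact(2) by (simp add: uh_def)
  note part_i = perturbed_mop_formulas_i[OF mop_factD(1)[OF mfu] mfh fQ1 dQ1 nodes_zero]
  note part_ii = perturbed_mop_formulas_ii[OF mfu qdu mfh fQ1 dQ1 fQ2 dQ2 nodes_zero]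
  show ?thesis
    unfolding R_def F_def
    by (rule conjI, (rule impI, erule part_i), (intro allI impI, elim conjE, rule part_ii; assumption))
qed

end
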